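(* Let $X$ be a Banach space as described in the context and let $f\in X$. If there exists a sequence $p_n\in\mathcal{P}_n[\mathbb{Z}]$ with $\lim_{n\to\infty}\|f-p_n\|=0$, then all Taylor coefficients $c_k=\frac{f^{(k)}(0)}{k!}$ of $f$ are integers.
   Context: $\mathbb{D}=\{z\in\mathbb{C}:|z|<1\}$. $X$ is a complex Banach space of functions analytic in $\mathbb{D}$ whose norm $\|\cdot\|$ satisfies: (i) $\|f(\cdot\, e^{it})\|=\|f(\cdot)\|$ for all $t\in\mathbb{R}$ and $f\in X$; (ii) $\|f\|<\infty$ for every entire function $f$; (iii) for all $f\in X$ and $g\in L[0,2\pi]$, $\big\|\frac{1}{2\pi}\int_0^{2\pi} f(ze^{it})g(t)\,dt\big\|\le \frac{1}{2\pi}\int_0^{2\pi}|g(t)|\,dt\cdot\|f\|$. A complex number is called an integer if its real and imaginary parts are integers; $\mathcal{P}_n[\mathbb{Z}]$ is the set of complex polynomials of degree at most $n-1$ with integer coefficients in this sense. *)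

theory Defs
  imports "HOL-Analysis.Analysis" "HOL-Computational_Algebra.Polynomial"
begin

text \<open>Functions on the unit disc are represented as total functions complex => complex
  that vanish outside the disc (a canonical representative).\<close>

definition restrD :: "(complex \<Rightarrow> complex) \<Rightarrow> complex \<Rightarrow> complex" where
  "restrD f = (\<lambda>z. if z \<in> ball 0 1 then f z else 0)"

definition disc_banach_space :: "(complex \<Rightarrow> complex) set \<Rightarrow> ((complex \<Rightarrow> complex) \<Rightarrow> real) \<Rightarrow> bool" where
  "disc_banach_space X N \<longleftrightarrow>
     (\<forall>f\<in>X. f analytic_on ball 0 1 \<and> (\<forall>z. z \<notin> ball 0 1 \<longrightarrow> f z = 0)) \<and>
     (\<lambda>z. 0) \<in> X \<and>
     (\<forall>f\<in>X. \<forall>g\<in>X. (\<lambda>z. f z + g z) \<in> X) \<and>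
     (\<forall>c. \<forall>f\<in>X. (\<lambda>z. c * f z) \<in> X) \<and>
     (\<forall>f\<in>X. 0 \<le> N f) \<and>
     (\<forall>f\<in>X. N f = 0 \<longleftrightarrow> f = (\<lambda>z. 0)) \<and>
     (\<forall>c. \<forall>f\<in>X. N (\<lambda>z. c * f z) = norm c * N f) \<and>
     (\<forall>f\<in>X. \<forall>g\<in>X. N (\<lambda>z. f z + g z) \<le> N f + N g) \<and>
     (\<forall>s. (\<forall>n. s n \<in> X) \<longrightarrow>
          (\<forall>e>0. \<exists>M. \<forall>m\<ge>M. \<forall>n\<ge>M. N (\<lambda>z. s m z - s n z) < e) \<longrightarrow>
          (\<exists>f\<in>X. (\<lambda>n. N (\<lambda>z. s n z - f z)) \<longlonglongrightarrow> 0))"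

definition rot_invariant :: "(complex \<Rightarrow> complex) set \<Rightarrow> ((complex \<Rightarrow> complex) \<Rightarrow> real) \<Rightarrow> bool" where
  "rot_invariant X N \<longleftrightarrow>
     (\<forall>f\<in>X. \<forall>t::real. (\<lambda>z. f (z * cis t)) \<in> X \<and> N (\<lambda>z. f (z * cis t)) = N f)"

definition contains_entire :: "(complex \<Rightarrow> complex) set \<Rightarrow> bool" where
  "contains_entire X \<longleftrightarrow> (\<forall>f. f holomorphic_on UNIV \<longrightarrow> restrD f \<in> X)"

definition conv_bounded :: "(complex \<Rightarrow> complex) set \<Rightarrow> ((complex \<Rightarrow> complex) \<Rightarrow> real) \<Rightarrow> bool" where
  "conv_bounded X N \<longleftrightarrow>
     (\<forall>f\<in>X. \<forall>g :: real \<Rightarrow> complex. set_integrable lborel {0..2*pi} g \<longrightarrow>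
        (let h = restrD (\<lambda>z. (1 / (2*pi)) * (LINT t:{0..2*pi}|lborel. f (z * cis t) * g t))
         in h \<in> X \<and> N h \<le> (1 / (2*pi)) * (LINT t:{0..2*pi}|lborel. norm (g t)) * N f))"

definition gauss_int :: "complex \<Rightarrow> bool" where
  "gauss_int c \<longleftrightarrow> Re c \<in> \<int> \<and> Im c \<in> \<int>"

end

theory Submission
  imports Defs "HOL-Complex_Analysis.Complex_Analysis"
begin

text \<open>The k-th Taylor coefficient c_k(F) of a function F holomorphic on the disc is recovered
  by a rotation average: the mean over t \<in> [0, 2pi] of F(z e^(it)) e^(-ikt) is c_k(F) z^k, which is
  Cauchy's formula on the unit circle for w \<mapsto> F(z w). Condition (iii) with g(t) = e^(-ikt)
  therefore gives |c_k(F)| N(z^k) \<le> N(F). For F = f - p_n this shows c_k(p_n) \<longrightarrow> c_k(f), and the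
  Gaussian integers are closed.\<close>

definition taylor_coeff :: "(complex \<Rightarrow> complex) \<Rightarrow> nat \<Rightarrow> complex" where
  "taylor_coeff f k = (deriv ^^ k) f 0 / fact k"

lemma has_contour_integral_scaled_taylor_coeff:
  fixes G :: "complex \<Rightarrow> complex"
  assumes G: "G holomorphic_on S" and S: "open S" "cball 0 (norm z) \<subseteq> S"
  shows "((\<lambda>w. G (z * w) / w ^ Suc k) has_contour_integral 2 * pi * \<i> * (taylor_coeff G k * z ^ k))
           (circlepath 0 1)"
proof -
  define T where "T = (\<lambda>w. z * w) -` S"
  have "open T"
    using S(1) by (auto simp: T_def intro!: continuous_open_vimage continuous_intros)
  moreover have "cball 0 1 \<subseteq> T"
  proof
    fix w :: complex assume "w \<in> cball 0 1"
    then have "norm (z * w) \<le> norm z"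
      by (simp add: norm_mult mult_left_le)
    then show "w \<in> T" using S(2) by (auto simp: T_def)
  qed
  ultimately have T: "open T" "cball 0 1 \<subseteq> T" .
  have "0 \<in> T" using T(2) by (auto simp: subset_eq)
  have H: "(\<lambda>w. G (z * w)) holomorphic_on T"
  proof -
    have "(\<lambda>w. z * w) holomorphic_on T" by (intro holomorphic_intros)
    moreover have "(\<lambda>w. z * w) ` T \<subseteq> S" by (auto simp: T_def)
    ultimately show ?thesis
      using holomorphic_on_compose_gen[OF _ G] by (simp add: o_def)
  qed
  have "((\<lambda>w. G (z * w) / (w - 0) ^ Suc k) has_contour_integral
          (2 * pi * \<i> / fact k * (deriv ^^ k) (\<lambda>w. G (z * w)) 0)) (circlepath 0 1)"
    using T by (intro Cauchy_has_contour_integral_higher_derivative_circlepath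
        holomorphic_on_imp_continuous_on holomorphic_on_subset[OF H]) auto
  moreover have "(deriv ^^ k) (\<lambda>w. G (z * w)) 0 = z ^ k * (deriv ^^ k) G 0"
    using higher_deriv_compose_linear[OF G T(1) S(1), of 0 z k] \<open>0 \<in> T\<close> by (simp add: T_def)
  ultimately show ?thesis
    by (simp add: taylor_coeff_def mult_ac)
qed

lemma has_integral_rotation_taylor_coeff:
  fixes G :: "complex \<Rightarrow> complex"
  assumes "G holomorphic_on S" "open S" "cball 0 (norm z) \<subseteq> S"
  shows "((\<lambda>t. G (z * cis t) * cis (- (k * t))) has_integral 2 * pi * taylor_coeff G k * z ^ k)
           {0..2*pi}"
proof -
  have "((\<lambda>s. G (z * circlepath 0 1 s) / circlepath 0 1 s ^ Suc k
                          * vector_derivative (circlepath 0 1) (at s))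
                     has_integral 2 * pi * \<i> * (taylor_coeff G k * z ^ k)) {0..1}"
    using has_contour_integral_scaled_taylor_coeff[OF assms, of k] by (simp add: has_contour_integral)
  also have "(\<lambda>s. G (z * circlepath 0 1 s) / circlepath 0 1 s ^ Suc k
                          * vector_derivative (circlepath 0 1) (at s))
      = (\<lambda>s. 2 * pi * \<i> * (G (z * cis (2 * pi * s)) * cis (- (k * (2 * pi * s)))))"
  proof
    fix s :: real
    have "circlepath 0 1 s = cis (2 * pi * s)"
      by (simp add: circlepath cis_conv_exp mult_ac)
    moreover have "cis (- (k * (2 * pi * s))) = inverse (cis (2 * pi * s) ^ k)"
      by (simp only: Complex.DeMoivre cis_inverse)
    ultimately show "G (z * circlepath 0 1 s) / circlepath 0 1 s ^ Suc k
                       * vector_derivative (circlepath 0 1) (at s)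
                     = 2 * pi * \<i> * (G (z * cis (2 * pi * s)) * cis (- (k * (2 * pi * s))))"
      by (simp add: vector_derivative_circlepath cis_conv_exp field_simps mult_ac)
  qed
  finally have "((\<lambda>s. G (z * cis (2 * pi * s)) * cis (- (k * (2 * pi * s))))
                  has_integral taylor_coeff G k * z ^ k) {0..1}"
    by (simp add: has_integral_mult_right_iff)
  then show ?thesis
    using has_integral_stretch_real_iff[of "2 * pi" "\<lambda>t. G (z * cis t) * cis (- (k * t))" _ 0 "2 * pi"]
    by (simp add: scaleR_conv_of_real mult_ac)
qed

lemma set_integral_rotation_taylor_coeff:
  fixes G :: "complex \<Rightarrow> complex"
  assumes G: "G holomorphic_on S" and S: "open S" "cball 0 (norm z) \<subseteq> S"
  shows "(LINT t:{0..2*pi}|lborel. G (z * cis t) * cis (- (k * t))) = 2 * pi * taylor_coeff G k * z ^ k"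
proof -
  have "continuous_on {0..2*pi} (\<lambda>t. z * cis t)"
    by (auto simp: cis_conv_exp intro!: continuous_intros)
  moreover have "(\<lambda>t. z * cis t) ` {0..2*pi} \<subseteq> S"
    using S(2) by (auto simp: norm_mult)
  ultimately have "continuous_on {0..2*pi} (\<lambda>t. G (z * cis t) * cis (- (k * t)))"
    using holomorphic_on_imp_continuous_on[OF G]
    by (auto simp: cis_conv_exp intro!: continuous_intros continuous_on_compose2[of S G])
  then have "set_integrable lborel {0..2*pi} (\<lambda>t. G (z * cis t) * cis (- (k * t)))"
    by (rule borel_integrable_atLeastAtMost')
  then show ?thesis
    using has_integral_rotation_taylor_coeff[OF assms, of k]
    by (simp add: set_borel_integral_eq_integral(2) integral_unique)
qed

lemma taylor_coeff_poly: "taylor_coeff (poly p) k = coeff p k"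
proof -
  have "eval_fps (fps_of_poly p) = poly p" by (rule ext) simp
  then show ?thesis
    using fps_nth_conv_deriv[of "fps_of_poly p" k] by (simp add: taylor_coeff_def)
qed

lemma taylor_coeff_minus_restrD_poly:
  assumes "f holomorphic_on ball 0 1"
  shows "taylor_coeff (\<lambda>z. f z - restrD (poly p) z) k = taylor_coeff f k - coeff p k"
proof -
  have "eventually (\<lambda>z. f z - restrD (poly p) z = f z - poly p z) (nhds 0)"
    unfolding eventually_nhds by (intro exI[of _ "ball 0 1"]) (auto simp: restrD_def)
  then have "(deriv ^^ k) (\<lambda>z. f z - restrD (poly p) z) 0 = (deriv ^^ k) (\<lambda>z. f z - poly p z) 0"
    by (rule higher_deriv_cong_ev) simp
  also have "\<dots> = (deriv ^^ k) f 0 - (deriv ^^ k) (poly p) 0"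
    using assms by (intro higher_deriv_diff) (auto intro: holomorphic_intros)
  finally show ?thesis
    using taylor_coeff_poly[of p k] by (simp add: taylor_coeff_def diff_divide_distrib)
qed

lemma rotation_average_eq_taylor_monomial:
  assumes "F holomorphic_on ball 0 1"
  shows "restrD (\<lambda>z. 1 / (2*pi) * (LINT t:{0..2*pi}|lborel. F (z * cis t) * cis (- (k * t))))
           = (\<lambda>z. taylor_coeff F k * restrD (\<lambda>z. z ^ k) z)"
proof
  fix z :: complex
  show "restrD (\<lambda>z. 1 / (2*pi) * (LINT t:{0..2*pi}|lborel. F (z * cis t) * cis (- (k * t)))) z
          = taylor_coeff F k * restrD (\<lambda>z. z ^ k) z"
  proof (cases "z \<in> ball 0 1")
    case True
    then have "cball 0 (norm z) \<subseteq> ball 0 1" by auto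
    from set_integral_rotation_taylor_coeff[OF assms open_ball this, of k] True show ?thesis
      by (simp add: restrD_def)
  qed (simp add: restrD_def)
qed

lemma disc_banach_space_holomorphic:
  assumes "disc_banach_space X N" "f \<in> X"
  shows "f holomorphic_on ball 0 1"
  using assms analytic_imp_holomorphic by (auto simp: disc_banach_space_def)

lemma disc_banach_space_diff:
  assumes "disc_banach_space X N" "f \<in> X" "g \<in> X"
  shows "(\<lambda>z. f z - g z) \<in> X"
proof -
  have "(\<lambda>z. (-1) * g z) \<in> X"
    using assms(1,3) unfolding disc_banach_space_def by blast
  moreover have "\<forall>f\<in>X. \<forall>g\<in>X. (\<lambda>z. f z + g z) \<in> X"
    using assms(1) unfolding disc_banach_space_def by blast
  ultimately show ?thesis
    using assms(2) by force
qed

lemma disc_banach_space_norm_scale: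
  assumes "disc_banach_space X N" "f \<in> X"
  shows "N (\<lambda>z. c * f z) = norm c * N f"
  using assms by (simp add: disc_banach_space_def)

lemma restrD_monomial_in:
  assumes "contains_entire X"
  shows "restrD (\<lambda>z. z ^ k) \<in> X"
  using assms unfolding contains_entire_def by (simp add: holomorphic_intros)

lemma norm_restrD_monomial_pos:
  assumes "disc_banach_space X N" "contains_entire X"
  shows "N (restrD (\<lambda>z. z ^ k)) > 0"
proof -
  have u: "restrD (\<lambda>z. z ^ k) \<in> X"
    using restrD_monomial_in[OF assms(2)] .
  have "restrD (\<lambda>z. z ^ k) \<noteq> (\<lambda>z. 0)"
    by (auto simp: restrD_def fun_eq_iff intro!: exI[of _ "1/2"])
  with u assms(1) have "N (restrD (\<lambda>z. z ^ k)) \<noteq> 0"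
    unfolding disc_banach_space_def by blast
  moreover have "N (restrD (\<lambda>z. z ^ k)) \<ge> 0"
    using u assms(1) unfolding disc_banach_space_def by blast
  ultimately show ?thesis by linarith
qed

lemma norm_taylor_coeff_le:
  assumes X: "disc_banach_space X N" "contains_entire X" "conv_bounded X N" and F: "F \<in> X"
  shows "norm (taylor_coeff F k) * N (restrD (\<lambda>z. z ^ k)) \<le> N F"
proof -
  have g: "set_integrable lborel {0..2*pi} (\<lambda>t. cis (- (k * t)))"
    by (auto simp: cis_conv_exp intro!: borel_integrable_atLeastAtMost' continuous_intros)
  have "(LINT t:{0..2*pi}|lborel. norm (cis (- (k * t)))) = 2 * pi"
    using borel_integrable_atLeastAtMost'[of 0 "2*pi" "\<lambda>_. 1::real"]
    by (simp add: set_borel_integral_eq_integral(2))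
  with conv_bounded_def[THEN iffD1, OF X(3), rule_format, OF F g]
  have "N (\<lambda>z. taylor_coeff F k * restrD (\<lambda>z. z ^ k) z) \<le> N F"
    unfolding rotation_average_eq_taylor_monomial[OF disc_banach_space_holomorphic[OF X(1) F]] Let_def
    by simp
  then show ?thesis
    by (simp add: disc_banach_space_norm_scale[OF X(1) restrD_monomial_in[OF X(2)]])
qed

lemma closed_gauss_int: "closed {c. gauss_int c}"
proof -
  have "{c. gauss_int c} = Re -` \<int> \<inter> Im -` \<int>"
    by (auto simp: gauss_int_def)
  then show ?thesis
    by (simp add: closed_Int closed_vimage continuous_on_Re continuous_on_Im)
qed

theorem theorem5p2:
  fixes X :: "(complex \<Rightarrow> complex) set" and N :: "(complex \<Rightarrow> complex) \<Rightarrow> real"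
    and f :: "complex \<Rightarrow> complex" and p :: "nat \<Rightarrow> complex poly"
  assumes "disc_banach_space X N" and "rot_invariant X N" and "contains_entire X"
    and "conv_bounded X N"
    and "f \<in> X"
    and "\<forall>n. p n = 0 \<or> degree (p n) < n"
    and "\<forall>n i. gauss_int (coeff (p n) i)"
    and "(\<lambda>n. N (\<lambda>z. f z - restrD (poly (p n)) z)) \<longlonglongrightarrow> 0"
  shows "\<forall>k. gauss_int ((deriv ^^ k) f 0 / fact k)"
proof
  fix k
  have "norm (taylor_coeff f k - coeff (p n) k) * N (restrD (\<lambda>z. z ^ k))
               \<le> N (\<lambda>z. f z - restrD (poly (p n)) z)" for n
  proof -
    have "restrD (poly (p n)) \<in> X"
      using assms(3) unfolding contains_entire_def by (simp add: holomorphic_intros)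
    from norm_taylor_coeff_le[OF assms(1,3,4) disc_banach_space_diff[OF assms(1,5) this], of k]
    show ?thesis unfolding taylor_coeff_minus_restrD_poly[OF disc_banach_space_holomorphic[OF assms(1,5)]] .
  qed
  then have "eventually (\<lambda>n. norm (coeff (p n) k - taylor_coeff f k)
               \<le> N (\<lambda>z. f z - restrD (poly (p n)) z) / N (restrD (\<lambda>z. z ^ k))) sequentially"
    using norm_restrD_monomial_pos[OF assms(1,3)] by (simp add: pos_le_divide_eq norm_minus_commute)
  then have "(\<lambda>n. coeff (p n) k - taylor_coeff f k) \<longlonglongrightarrow> 0"
    by (rule Lim_null_comparison) (rule tendsto_divide_zero[OF assms(8)])
  then have lim: "(\<lambda>n. coeff (p n) k) \<longlonglongrightarrow> taylor_coeff f k"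
    by (rule LIM_zero_cancel)
  have "taylor_coeff f k \<in> {c. gauss_int c}"
    by (rule closed_sequentially[OF closed_gauss_int _ lim]) (simp add: assms(7))
  then show "gauss_int ((deriv ^^ k) f 0 / fact k)"
    by (simp add: taylor_coeff_def)
qed

end
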